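(* Let $M$ be a matroid, let $S,T$ be disjoint subsets of $E(M)$, let $k:=\kappa_M(S,T)$, and let $F\subseteq E(M)-(S\cup T)$ be a set of elements none of which is flexible with respect to $(S,T)$. Let $t:=|F|$. Then there exist an ordering $(f_1,\dots,f_t)$ of $F$ and a sequence $(A_1,\dots,A_t)$ of subsets of $E(M)$ such that: (1) for each $i\in\{1,\dots,t\}$, $S\subseteq A_i\subseteq E(M)-T$ and $\lambda_M(A_i)=k$; (2) $A_i\subseteq A_{i+1}$ for each $i\in\{1,\dots,t-1\}$; (3) $A_i\cap F=\{f_1,\dots,f_i\}$ for each $i\in\{1,\dots,t\}$; (4) for each $i$, $f_i\in \mathrm{cl}_M(A_i-f_i)\cap\mathrm{cl}_M(E(M)-A_i)$ or $f_i\in\mathrm{cl}^*_M(A_i-f_i)\cap\mathrm{cl}^*_M(E(M)-A_i)$.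
   Context: For a matroid $M$ with ground set $E$, $\lambda_M(X):=r_M(X)+r_M(E-X)-r(M)$, and for disjoint $S,T\subseteq E$, $\kappa_M(S,T):=\min\{\lambda_M(X):S\subseteq X\subseteq E-T\}$. $\mathrm{cl}_M$ is the closure operator and $\mathrm{cl}^*_M$ the closure operator of the dual matroid $M^*$. For $e\in E-(S\cup T)$: $e$ is deletable with respect to $(S,T)$ if $\kappa_{M\setminus e}(S,T)=\kappa_M(S,T)$; contractible with respect to $(S,T)$ if $\kappa_{M/e}(S,T)=\kappa_M(S,T)$; flexible with respect to $(S,T)$ if it is both deletable and contractible. *)

theory Defs
  imports Main
begin

text \<open>A (finite) matroid is given by its ground set E and its rank function r,
  satisfying the standard rank axioms on subsets of E. Values of r outside
  Pow E are irrelevant.\<close>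

definition matroid :: "'a set \<Rightarrow> ('a set \<Rightarrow> nat) \<Rightarrow> bool" where
  "matroid E r \<longleftrightarrow> finite E
     \<and> (\<forall>X. X \<subseteq> E \<longrightarrow> r X \<le> card X)
     \<and> (\<forall>X Y. X \<subseteq> Y \<and> Y \<subseteq> E \<longrightarrow> r X \<le> r Y)
     \<and> (\<forall>X Y. X \<subseteq> E \<and> Y \<subseteq> E \<longrightarrow> r (X \<union> Y) + r (X \<inter> Y) \<le> r X + r Y)"

definition conn :: "'a set \<Rightarrow> ('a set \<Rightarrow> nat) \<Rightarrow> 'a set \<Rightarrow> nat" where
  "conn E r X = r X + r (E - X) - r E"

definition kappa :: "'a set \<Rightarrow> ('a set \<Rightarrow> nat) \<Rightarrow> 'a set \<Rightarrow> 'a set \<Rightarrow> nat" where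
  "kappa E r S T = Min {conn E r X | X. S \<subseteq> X \<and> X \<subseteq> E - T}"

text \<open>Deletion M\e has ground set E - {e} and the same rank function;
  contraction M/e has ground set E - {e} and rank X \<mapsto> r(X \<union> {e}) - r({e}).\<close>
definition contract_rank :: "('a set \<Rightarrow> nat) \<Rightarrow> 'a \<Rightarrow> 'a set \<Rightarrow> nat" where
  "contract_rank r e X = r (X \<union> {e}) - r {e}"

definition dual_rank :: "'a set \<Rightarrow> ('a set \<Rightarrow> nat) \<Rightarrow> 'a set \<Rightarrow> nat" where
  "dual_rank E r X = card X + r (E - X) - r E"

definition cl :: "'a set \<Rightarrow> ('a set \<Rightarrow> nat) \<Rightarrow> 'a set \<Rightarrow> 'a set" where
  "cl E r X = {x \<in> E. r (insert x X) = r X}"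

definition cl_dual :: "'a set \<Rightarrow> ('a set \<Rightarrow> nat) \<Rightarrow> 'a set \<Rightarrow> 'a set" where
  "cl_dual E r X = cl E (dual_rank E r) X"

definition deletable :: "'a set \<Rightarrow> ('a set \<Rightarrow> nat) \<Rightarrow> 'a set \<Rightarrow> 'a set \<Rightarrow> 'a \<Rightarrow> bool" where
  "deletable E r S T e \<longleftrightarrow> kappa (E - {e}) r S T = kappa E r S T"

definition contractible :: "'a set \<Rightarrow> ('a set \<Rightarrow> nat) \<Rightarrow> 'a set \<Rightarrow> 'a set \<Rightarrow> 'a \<Rightarrow> bool" where
  "contractible E r S T e \<longleftrightarrow> kappa (E - {e}) (contract_rank r e) S T = kappa E r S T"

definition flexible :: "'a set \<Rightarrow> ('a set \<Rightarrow> nat) \<Rightarrow> 'a set \<Rightarrow> 'a set \<Rightarrow> 'a \<Rightarrow> bool" where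
  "flexible E r S T e \<longleftrightarrow> deletable E r S T e \<and> contractible E r S T e"

end

theory Submission
  imports Defs
begin

text \<open>Submodularity of \<open>\<lambda>\<close> makes the sets \<open>Z\<close> with \<open>S \<subseteq> Z \<subseteq> E - T\<close> and \<open>\<lambda>(Z) = k\<close>
  closed under union and intersection. If \<open>f\<close> is not deletable, some \<open>X\<close> avoiding \<open>f\<close> has
  \<open>\<lambda>\<^sub>M\<^sub>\<setminus>\<^sub>f(X) < k\<close>, and as removing \<open>f\<close> lowers \<open>\<lambda>\<close> by at most one, both \<open>X\<close> and \<open>X \<union> {f}\<close>
  belong to this lattice; likewise if \<open>f\<close> is not contractible. So every non-flexible \<open>f\<close> lies
  in a least member \<open>P(f)\<close> of the lattice, and \<open>P(f) - f = P(f) \<inter> X\<close> is again a member, whence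
  \<open>P(g) \<subset> P(f)\<close> for \<open>g \<in> P(f) - f\<close>. Listing \<open>F\<close> by increasing \<open>|P(f)|\<close> and letting \<open>A\<^sub>i\<close> be
  the union of \<open>P(f\<^sub>1), \<dots>, P(f\<^sub>i)\<close> gives the chain; since \<open>A\<^sub>i - f\<^sub>i\<close> is still in the lattice,
  \<open>\<lambda>(A\<^sub>i - f\<^sub>i) = \<lambda>(A\<^sub>i)\<close>, which forces \<open>f\<^sub>i\<close> into both closures or into both coclosures.\<close>

lemma finite_kappa_candidates:
  assumes "finite E"
  shows "finite {conn E r X |X. S \<subseteq> X \<and> X \<subseteq> E - T}"
proof -
  have "finite {X. S \<subseteq> X \<and> X \<subseteq> E - T}"
    by (rule finite_subset[of _ "Pow E"]) (use assms in auto)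
  then show ?thesis by (rule finite_image_set)
qed

lemma kappa_le_conn:
  assumes "finite E" "S \<subseteq> X" "X \<subseteq> E - T"
  shows "kappa E r S T \<le> conn E r X"
  unfolding kappa_def using assms finite_kappa_candidates[OF assms(1)] by (intro Min_le) auto

lemma kappa_attained:
  assumes "finite E" "S \<subseteq> E - T"
  obtains X where "S \<subseteq> X" "X \<subseteq> E - T" "conn E r X = kappa E r S T"
proof -
  have "{conn E r X |X. S \<subseteq> X \<and> X \<subseteq> E - T} \<noteq> {}" using assms by auto
  then have "kappa E r S T \<in> {conn E r X |X. S \<subseteq> X \<and> X \<subseteq> E - T}"
    unfolding kappa_def using finite_kappa_candidates[OF assms(1)] by (intro Min_in)
  then obtain X where "kappa E r S T = conn E r X" "S \<subseteq> X" "X \<subseteq> E - T"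
    unfolding mem_Collect_eq by blast
  then show ?thesis using that by simp
qed

text \<open>Common to deletion and contraction: \<open>r'\<close> is the rank function of the minor.\<close>

lemma kappa_minor_neq_obtains:
  assumes "finite E" "S \<subseteq> E - T" "f \<in> E - (S \<union> T)"
    and conn_minor_le: "\<And>Z. Z \<subseteq> E \<Longrightarrow> conn (E - {f}) r' (Z - {f}) \<le> conn E r Z"
    and conn_le_minor: "\<And>X. X \<subseteq> E - {f} \<Longrightarrow> conn E r X \<le> Suc (conn (E - {f}) r' X)"
    and conn_insert_le_minor:
      "\<And>X. X \<subseteq> E - {f} \<Longrightarrow> conn E r (insert f X) \<le> Suc (conn (E - {f}) r' X)"
    and neq: "kappa (E - {f}) r' S T \<noteq> kappa E r S T"
  obtains X where "S \<subseteq> X" "insert f X \<subseteq> E - T" "f \<notin> X"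
    "conn E r X \<le> kappa E r S T" "conn E r (insert f X) \<le> kappa E r S T"
proof -
  have fin: "finite (E - {f})" using assms(1) by blast
  obtain Z where Z: "S \<subseteq> Z" "Z \<subseteq> E - T" "conn E r Z = kappa E r S T"
    using kappa_attained[OF assms(1,2)] .
  have "kappa (E - {f}) r' S T \<le> conn (E - {f}) r' (Z - {f})"
    using Z assms(3) by (intro kappa_le_conn[OF fin]) auto
  also have "\<dots> \<le> kappa E r S T" using conn_minor_le[of Z] Z by auto
  finally have lt: "kappa (E - {f}) r' S T < kappa E r S T" using neq by simp
  have "S \<subseteq> E - {f} - T" using assms(2,3) by blast
  then obtain X where X: "S \<subseteq> X" "X \<subseteq> E - {f} - T" "conn (E - {f}) r' X = kappa (E - {f}) r' S T"
    by (rule kappa_attained[OF fin])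
  have XE: "X \<subseteq> E - {f}" using X(2) by blast
  have "conn E r X \<le> Suc (kappa (E - {f}) r' S T)"
    using conn_le_minor[OF XE] unfolding X(3) .
  moreover have "conn E r (insert f X) \<le> Suc (kappa (E - {f}) r' S T)"
    using conn_insert_le_minor[OF XE] unfolding X(3) .
  moreover have "insert f X \<subseteq> E - T" "f \<notin> X" using X assms(3) by auto
  ultimately show ?thesis
    using that[OF X(1)] lt by simp
qed

locale rank_matroid =
  fixes E :: "'a set" and r :: "'a set \<Rightarrow> nat"
  assumes is_matroid: "matroid E r"
begin

lemma finite_ground: "finite E"
  using is_matroid by (simp add: matroid_def)

lemma rank_le_card: "X \<subseteq> E \<Longrightarrow> r X \<le> card X"
  using is_matroid by (simp add: matroid_def)

lemma rank_mono: "X \<subseteq> Y \<Longrightarrow> Y \<subseteq> E \<Longrightarrow> r X \<le> r Y"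
  using is_matroid by (simp add: matroid_def)

lemma rank_submod: "X \<subseteq> E \<Longrightarrow> Y \<subseteq> E \<Longrightarrow> r (X \<union> Y) + r (X \<inter> Y) \<le> r X + r Y"
  using is_matroid by (simp add: matroid_def)

lemma rank_empty: "r {} = 0"
  using rank_le_card[of "{}"] by simp

lemma rank_singleton_le: "f \<in> E \<Longrightarrow> r {f} \<le> 1"
  using rank_le_card[of "{f}"] by simp

lemma rank_insert_le: "W \<subseteq> E \<Longrightarrow> f \<in> E \<Longrightarrow> r (insert f W) \<le> r W + r {f}"
  using rank_submod[of W "{f}"] by simp

lemma rank_insert_le_Suc:
  assumes "W \<subseteq> E" "f \<in> E"
  shows "r (insert f W) \<le> Suc (r W)"
  using rank_insert_le[OF assms] rank_singleton_le[OF assms(2)] by linarith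

lemma rank_le_add_diff:
  assumes "X \<subseteq> W" "W \<subseteq> E"
  shows "r W \<le> r X + r (W - X)"
proof -
  have "X \<union> (W - X) = W" "X \<inter> (W - X) = {}" using assms(1) by auto
  then show ?thesis using rank_submod[of X "W - X"] assms rank_empty by auto
qed

lemma int_conn:
  "X \<subseteq> W \<Longrightarrow> W \<subseteq> E \<Longrightarrow> int (conn W r X) = int (r X) + int (r (W - X)) - int (r W)"
  using rank_le_add_diff[of X W] unfolding conn_def by linarith

lemma int_conn_contract:
  assumes "X \<subseteq> E - {f}" "f \<in> E"
  shows "int (conn (E - {f}) (contract_rank r f) X)
     = int (r (insert f X)) + int (r (insert f (E - {f} - X))) - int (r E) - int (r {f})"
proof -
  have "insert f X \<union> insert f (E - {f} - X) = E" "insert f X \<inter> insert f (E - {f} - X) = {f}"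
    using assms by auto
  moreover have "insert f X \<subseteq> E" "insert f (E - {f} - X) \<subseteq> E" using assms by auto
  ultimately have "r E + r {f} \<le> r (insert f X) + r (insert f (E - {f} - X))"
    using rank_submod by metis
  moreover have "r {f} \<le> r (insert f X)" "r {f} \<le> r (insert f (E - {f} - X))" "r {f} \<le> r E"
    using assms by (auto intro: rank_mono)
  moreover have "E - {f} \<union> {f} = E" using assms by auto
  ultimately show ?thesis unfolding conn_def contract_rank_def by simp
qed

lemma conn_submod:
  assumes "A \<subseteq> E" "B \<subseteq> E"
  shows "conn E r (A \<union> B) + conn E r (A \<inter> B) \<le> conn E r A + conn E r B"
proof -
  have "r (A \<union> B) + r (A \<inter> B) \<le> r A + r B"
    "r ((E - A) \<union> (E - B)) + r ((E - A) \<inter> (E - B)) \<le> r (E - A) + r (E - B)"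
    using assms by (auto intro: rank_submod)
  moreover have "E - (A \<union> B) = (E - A) \<inter> (E - B)" "E - (A \<inter> B) = (E - A) \<union> (E - B)" by blast+
  moreover have "A \<union> B \<subseteq> E" "A \<inter> B \<subseteq> E" using assms by auto
  ultimately have "int (conn E r (A \<union> B)) + int (conn E r (A \<inter> B))
      \<le> int (conn E r A) + int (conn E r B)"
    using int_conn[OF _ order_refl] assms by simp
  then show ?thesis by linarith
qed

lemma conn_delete_le:
  assumes "Z \<subseteq> E"
  shows "conn (E - {f}) r (Z - {f}) \<le> conn E r Z"
proof -
  have minor: "int (conn (E - {f}) r (Z - {f}))
      = int (r (Z - {f})) + int (r (E - {f} - (Z - {f}))) - int (r (E - {f}))"
    using assms by (intro int_conn) auto
  have conn_Z: "int (conn E r Z) = int (r Z) + int (r (E - Z)) - int (r E)"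
    using assms by (intro int_conn) auto
  show ?thesis
  proof (cases "f \<in> Z")
    case True
    then have "Z \<union> (E - {f}) = E" "Z \<inter> (E - {f}) = Z - {f}" "E - {f} - (Z - {f}) = E - Z"
      using assms by auto
    then have "r E + r (Z - {f}) \<le> r Z + r (E - {f})" "r (E - {f} - (Z - {f})) = r (E - Z)"
      using rank_submod[of Z "E - {f}"] assms by auto
    then show ?thesis using minor conn_Z by linarith
  next
    case False
    then have Z_eq: "Z - {f} = Z" by simp
    have "r E + r (E - {f} - Z) \<le> r (E - Z) + r (E - {f})"
    proof (cases "f \<in> E")
      case True
      then have "(E - Z) \<union> (E - {f}) = E" "(E - Z) \<inter> (E - {f}) = E - {f} - Z" using False by auto
      then show ?thesis using rank_submod[of "E - Z" "E - {f}"] by auto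
    qed simp
    then show ?thesis using minor conn_Z unfolding Z_eq by linarith
  qed
qed

lemma conn_contract_le:
  assumes "Z \<subseteq> E" "f \<in> E"
  shows "conn (E - {f}) (contract_rank r f) (Z - {f}) \<le> conn E r Z"
proof -
  have minor: "int (conn (E - {f}) (contract_rank r f) (Z - {f}))
      = int (r (insert f (Z - {f}))) + int (r (insert f (E - {f} - (Z - {f})))) - int (r E) - int (r {f})"
    using assms by (intro int_conn_contract) auto
  have conn_Z: "int (conn E r Z) = int (r Z) + int (r (E - Z)) - int (r E)"
    using assms by (intro int_conn) auto
  show ?thesis
  proof (cases "f \<in> Z")
    case True
    then have "insert f (Z - {f}) = Z" "insert f (E - {f} - (Z - {f})) = insert f (E - Z)"
      by auto
    moreover have "r (insert f (E - Z)) \<le> r (E - Z) + r {f}"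
      using assms by (intro rank_insert_le) auto
    ultimately show ?thesis using minor conn_Z by simp
  next
    case False
    then have "insert f (Z - {f}) = insert f Z" "insert f (E - {f} - (Z - {f})) = E - Z"
      using assms by auto
    moreover have "r (insert f Z) \<le> r Z + r {f}"
      using assms by (intro rank_insert_le)
    ultimately show ?thesis using minor conn_Z by simp
  qed
qed

lemma
  assumes "X \<subseteq> E - {f}" "f \<in> E"
  shows conn_le_conn_delete_Suc: "conn E r X \<le> Suc (conn (E - {f}) r X)"
    and conn_insert_le_conn_delete_Suc: "conn E r (insert f X) \<le> Suc (conn (E - {f}) r X)"
proof -
  have XE: "X \<subseteq> E" "insert f X \<subseteq> E" using assms by auto
  have compl: "E - X = insert f (E - {f} - X)" "E - insert f X = E - {f} - X"
    using assms by auto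
  have minor: "int (conn (E - {f}) r X) = int (r X) + int (r (E - {f} - X)) - int (r (E - {f}))"
    using assms by (intro int_conn) auto
  have "r (insert f (E - {f} - X)) \<le> Suc (r (E - {f} - X))" "r (insert f X) \<le> Suc (r X)"
    using assms by (auto intro: rank_insert_le_Suc)
  moreover have "r (E - {f}) \<le> r E" by (rule rank_mono) auto
  ultimately show "conn E r X \<le> Suc (conn (E - {f}) r X)"
    and "conn E r (insert f X) \<le> Suc (conn (E - {f}) r X)"
    using int_conn[OF XE(1) order_refl] int_conn[OF XE(2) order_refl] minor
    unfolding compl by linarith+
qed

lemma
  assumes "X \<subseteq> E - {f}" "f \<in> E"
  shows conn_le_conn_contract_Suc: "conn E r X \<le> Suc (conn (E - {f}) (contract_rank r f) X)"
    and conn_insert_le_conn_contract_Suc: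
      "conn E r (insert f X) \<le> Suc (conn (E - {f}) (contract_rank r f) X)"
proof -
  have XE: "X \<subseteq> E" "insert f X \<subseteq> E" using assms by auto
  have compl: "E - X = insert f (E - {f} - X)" "E - insert f X = E - {f} - X"
    using assms by auto
  have "r (E - {f} - X) \<le> r (insert f (E - {f} - X))" "r X \<le> r (insert f X)"
    using assms by (auto intro: rank_mono)
  moreover have "r {f} \<le> 1" using assms(2) by (rule rank_singleton_le)
  ultimately show "conn E r X \<le> Suc (conn (E - {f}) (contract_rank r f) X)"
    and "conn E r (insert f X) \<le> Suc (conn (E - {f}) (contract_rank r f) X)"
    using int_conn[OF XE(1) order_refl] int_conn[OF XE(2) order_refl] int_conn_contract[OF assms]
    unfolding compl by linarith+
qed

text \<open>Adding \<open>f\<close> to \<open>A - f\<close> raises the rank of one side exactly when it raises the rank of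
  the other, because \<open>\<lambda>\<close> stays the same; if neither rises we get the closures, and if both
  rise the coranks do not, giving the coclosures.\<close>

lemma mem_cl_or_cl_dual_if_conn_remove_eq:
  assumes "f \<in> A" "A \<subseteq> E" "conn E r (A - {f}) = conn E r A"
  shows "f \<in> cl E r (A - {f}) \<inter> cl E r (E - A)
       \<or> f \<in> cl_dual E r (A - {f}) \<inter> cl_dual E r (E - A)"
proof -
  define X where "X = A - {f}"
  define Y where "Y = E - A"
  have fE: "f \<in> E" using assms by blast
  have XE: "X \<subseteq> E" and YE: "Y \<subseteq> E" and fX: "f \<notin> X" and fY: "f \<notin> Y"
    unfolding X_def Y_def using assms by auto
  have A_eq: "A = insert f X" "E - Y = A" using assms unfolding X_def Y_def by auto
  have compl: "E - X = insert f Y" "E - insert f Y = X" "E - insert f X = Y"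
    using assms unfolding X_def Y_def by auto
  have fin: "finite X" "finite Y" using XE YE finite_ground finite_subset by auto
  have "int (r X) + int (r (insert f Y)) = int (r (insert f X)) + int (r Y)"
    using assms(3) int_conn[OF XE order_refl] int_conn[OF assms(2) order_refl]
    unfolding X_def[symmetric] Y_def[symmetric] compl A_eq(1)[symmetric] by linarith
  moreover have "r X \<le> r (insert f X)" "r (insert f X) \<le> Suc (r X)"
    "r Y \<le> r (insert f Y)" "r (insert f Y) \<le> Suc (r Y)"
    using XE YE fE by (auto intro: rank_mono rank_insert_le_Suc)
  ultimately consider "r (insert f X) = r X" "r (insert f Y) = r Y"
    | "r (insert f X) = Suc (r X)" "r (insert f Y) = Suc (r Y)"
    by linarith
  then show ?thesis
  proof cases
    case 1
    then show ?thesis using fE unfolding cl_def X_def[symmetric] Y_def[symmetric] by auto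
  next
    case 2
    have "dual_rank E r (insert f X) = dual_rank E r X" "dual_rank E r (insert f Y) = dual_rank E r Y"
      unfolding dual_rank_def using 2 fin fX fY compl A_eq by simp_all
    then show ?thesis
      using fE unfolding cl_dual_def cl_def X_def[symmetric] Y_def[symmetric] by auto
  qed
qed

end

lemma nth_in_set_take_iff:
  assumes "distinct xs" "i < length xs"
  shows "xs ! i \<in> set (take n xs) \<longleftrightarrow> i < n"
proof
  assume "xs ! i \<in> set (take n xs)"
  then obtain j where "j < length (take n xs)" "take n xs ! j = xs ! i"
    by (auto simp: in_set_conv_nth)
  then show "i < n" using assms nth_eq_iff_index_eq[OF assms(1)] by auto
next
  assume "i < n"
  then show "xs ! i \<in> set (take n xs)" using assms(2) by (auto simp: in_set_conv_nth)
qed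

definition dependency_sorted :: "('a \<Rightarrow> 'a set) \<Rightarrow> 'a list \<Rightarrow> bool" where
  "dependency_sorted P xs \<longleftrightarrow> (\<forall>i < length xs. P (xs ! i) \<inter> set xs \<subseteq> set (take (Suc i) xs))"

lemma exists_dependency_sorted_list:
  assumes "finite F" "\<And>f. f \<in> F \<Longrightarrow> finite (P f)"
    and psubset: "\<And>f g. f \<in> F \<Longrightarrow> g \<in> F \<Longrightarrow> g \<in> P f \<Longrightarrow> g \<noteq> f \<Longrightarrow> P g \<subset> P f"
  obtains xs where "distinct xs" "set xs = F" "dependency_sorted P xs"
proof -
  obtain ys where "set ys = F" "distinct ys" using finite_distinct_list[OF assms(1)] by blast
  define xs where "xs = sort_key (\<lambda>f. card (P f)) ys"
  have xs: "distinct xs" "set xs = F" "sorted (map (\<lambda>f. card (P f)) xs)"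
    unfolding xs_def using \<open>set ys = F\<close> \<open>distinct ys\<close> by auto
  have "dependency_sorted P xs"
    unfolding dependency_sorted_def
  proof (intro allI impI subsetI)
    fix i y assume i: "i < length xs" and y: "y \<in> P (xs ! i) \<inter> set xs"
    then obtain j where j: "j < length xs" "xs ! j = y" by (metis IntD2 in_set_conv_nth)
    show "y \<in> set (take (Suc i) xs)"
    proof (rule ccontr)
      assume "y \<notin> set (take (Suc i) xs)"
      then have "i < j" using nth_in_set_take_iff[OF xs(1) j(1)] j(2) by simp
      then have "card (P (xs ! i)) \<le> card (P (xs ! j))"
        using sorted_nth_mono[OF xs(3), of i j] j(1) by simp
      moreover have "xs ! j \<noteq> xs ! i" using \<open>i < j\<close> i j(1) nth_eq_iff_index_eq[OF xs(1)] by auto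
      then have "P (xs ! j) \<subset> P (xs ! i)" using i j y xs(2) by (intro psubset) auto
      then have "card (P (xs ! j)) < card (P (xs ! i))"
        using i xs(2) by (intro psubset_card_mono assms(2)) auto
      ultimately show False by linarith
    qed
  qed
  with xs(1,2) show ?thesis by (rule that)
qed

definition prefix_union :: "('a \<Rightarrow> 'b set) \<Rightarrow> 'a list \<Rightarrow> nat \<Rightarrow> 'b set" where
  "prefix_union P xs n = (\<Union>x \<in> set (take n xs). P x)"

lemma prefix_union_mono:
  assumes "m \<le> n"
  shows "prefix_union P xs m \<subseteq> prefix_union P xs n"
  unfolding prefix_union_def by (rule UN_mono[OF set_take_subset_set_take[OF assms] order_refl])

lemma prefix_union_inter_set:
  assumes "dependency_sorted P xs" "\<And>x. x \<in> set xs \<Longrightarrow> x \<in> P x"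
  shows "prefix_union P xs n \<inter> set xs = set (take n xs)"
proof
  show "prefix_union P xs n \<inter> set xs \<subseteq> set (take n xs)"
  proof
    fix y assume "y \<in> prefix_union P xs n \<inter> set xs"
    then obtain j where j: "j < n" "j < length xs" "y \<in> P (xs ! j)" "y \<in> set xs"
      unfolding prefix_union_def by (auto simp: in_set_conv_nth)
    then have "y \<in> set (take (Suc j) xs)" using assms(1) unfolding dependency_sorted_def by blast
    moreover have "set (take (Suc j) xs) \<subseteq> set (take n xs)"
      using j(1) by (intro set_take_subset_set_take) simp
    ultimately show "y \<in> set (take n xs)" by blast
  qed
  show "set (take n xs) \<subseteq> prefix_union P xs n \<inter> set xs"
  proof
    fix x assume "x \<in> set (take n xs)"
    moreover from this have "x \<in> set xs" by (rule in_set_takeD)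
    ultimately show "x \<in> prefix_union P xs n \<inter> set xs"
      unfolding prefix_union_def using assms(2) by blast
  qed
qed

lemma prefix_union_Suc_remove:
  assumes "distinct xs" "dependency_sorted P xs" "i < length xs"
  shows "prefix_union P xs (Suc i) - {xs ! i} = prefix_union P xs i \<union> (P (xs ! i) - {xs ! i})"
proof -
  have "xs ! i \<notin> P x" if "x \<in> set (take i xs)" for x
  proof
    assume "xs ! i \<in> P x"
    from that obtain j where j: "j < i" "xs ! j = x"
      using assms(3) by (auto simp: in_set_conv_nth)
    have "P (xs ! j) \<inter> set xs \<subseteq> set (take (Suc j) xs)"
      using assms(2,3) j(1) unfolding dependency_sorted_def by simp
    then have "xs ! i \<in> set (take (Suc j) xs)"
      using \<open>xs ! i \<in> P x\<close> j(2) nth_mem[OF assms(3)] by blast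
    then show False using j(1) nth_in_set_take_iff[OF assms(1,3)] by simp
  qed
  moreover have "set (take (Suc i) xs) = insert (xs ! i) (set (take i xs))"
    using take_Suc_conv_app_nth[OF assms(3)] by simp
  ultimately show ?thesis unfolding prefix_union_def by auto
qed

locale matroid_terminals = rank_matroid +
  fixes S T :: "'a set"
  assumes S_subset: "S \<subseteq> E" and disjoint: "S \<inter> T = {}"
begin

definition min_sep :: "'a set \<Rightarrow> bool" where
  "min_sep Z \<longleftrightarrow> S \<subseteq> Z \<and> Z \<subseteq> E - T \<and> conn E r Z = kappa E r S T"

lemma S_subset_diff_T: "S \<subseteq> E - T"
  using S_subset disjoint by blast

lemma kappa_le_conn_of_subsets: "S \<subseteq> Z \<Longrightarrow> Z \<subseteq> E - T \<Longrightarrow> kappa E r S T \<le> conn E r Z"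
  by (rule kappa_le_conn[OF finite_ground])

lemma min_sep_iff_conn_le:
  "min_sep Z \<longleftrightarrow> S \<subseteq> Z \<and> Z \<subseteq> E - T \<and> conn E r Z \<le> kappa E r S T"
  unfolding min_sep_def using kappa_le_conn_of_subsets[of Z] le_antisym by fastforce

lemma
  assumes "min_sep A" "min_sep B"
  shows min_sep_Un: "min_sep (A \<union> B)" and min_sep_Int: "min_sep (A \<inter> B)"
proof -
  have subsets: "S \<subseteq> A \<union> B" "A \<union> B \<subseteq> E - T" "S \<subseteq> A \<inter> B" "A \<inter> B \<subseteq> E - T"
    and conn_eq: "conn E r A = kappa E r S T" "conn E r B = kappa E r S T"
    using assms unfolding min_sep_def by auto
  then have "A \<subseteq> E" "B \<subseteq> E" by auto
  then have "conn E r (A \<union> B) + conn E r (A \<inter> B) \<le> conn E r A + conn E r B"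
    by (rule conn_submod)
  moreover have "kappa E r S T \<le> conn E r (A \<union> B)" "kappa E r S T \<le> conn E r (A \<inter> B)"
    using subsets by (simp_all add: kappa_le_conn_of_subsets)
  ultimately have "conn E r (A \<union> B) = kappa E r S T" "conn E r (A \<inter> B) = kappa E r S T"
    unfolding conn_eq by linarith+
  with subsets show "min_sep (A \<union> B)" "min_sep (A \<inter> B)" unfolding min_sep_def by simp_all
qed

lemma min_sep_Union: "finite \<A> \<Longrightarrow> \<A> \<noteq> {} \<Longrightarrow> \<forall>Z\<in>\<A>. min_sep Z \<Longrightarrow> min_sep (\<Union>\<A>)"
proof (induction \<A> rule: finite_ne_induct)
  case (insert Z \<A>)
  then show ?case by (simp add: min_sep_Un)
qed simp

lemma min_sep_Inter: "finite \<A> \<Longrightarrow> \<A> \<noteq> {} \<Longrightarrow> \<forall>Z\<in>\<A>. min_sep Z \<Longrightarrow> min_sep (\<Inter>\<A>)"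
proof (induction \<A> rule: finite_ne_induct)
  case (insert Z \<A>)
  then show ?case by (simp add: min_sep_Int)
qed simp

lemma not_flexible_obtains:
  assumes f: "f \<in> E - (S \<union> T)" and "\<not> flexible E r S T f"
  obtains X where "min_sep X" "f \<notin> X" "min_sep (insert f X)"
proof -
  have fE: "f \<in> E" using f by blast
  obtain X where "S \<subseteq> X" "insert f X \<subseteq> E - T" "f \<notin> X"
    "conn E r X \<le> kappa E r S T" "conn E r (insert f X) \<le> kappa E r S T"
  proof (cases "deletable E r S T f")
    case False
    then have neq: "kappa (E - {f}) r S T \<noteq> kappa E r S T" unfolding deletable_def .
    show ?thesis
      by (rule kappa_minor_neq_obtains[OF finite_ground S_subset_diff_T f _ _ _ neq that])
        (use fE in \<open>auto intro: conn_delete_le conn_le_conn_delete_Suc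
            conn_insert_le_conn_delete_Suc\<close>)
  next
    case True
    with assms(2) have neq: "kappa (E - {f}) (contract_rank r f) S T \<noteq> kappa E r S T"
      unfolding flexible_def contractible_def by blast
    show ?thesis
      by (rule kappa_minor_neq_obtains[OF finite_ground S_subset_diff_T f _ _ _ neq that])
        (use fE in \<open>auto intro: conn_contract_le conn_le_conn_contract_Suc
            conn_insert_le_conn_contract_Suc\<close>)
  qed
  then have sep: "min_sep X" "min_sep (insert f X)" unfolding min_sep_iff_conn_le by auto
  show ?thesis by (rule that[OF sep(1) \<open>f \<notin> X\<close> sep(2)])
qed

definition least_min_sep :: "'a \<Rightarrow> 'a set" where
  "least_min_sep f = \<Inter>{Z. min_sep Z \<and> f \<in> Z}"

lemma mem_least_min_sep: "f \<in> least_min_sep f"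
  unfolding least_min_sep_def by blast

lemma least_min_sep_subset: "min_sep Z \<Longrightarrow> f \<in> Z \<Longrightarrow> least_min_sep f \<subseteq> Z"
  unfolding least_min_sep_def by blast

context
  fixes f assumes f: "f \<in> E - (S \<union> T)" and not_flexible: "\<not> flexible E r S T f"
begin

lemma min_sep_least_min_sep: "min_sep (least_min_sep f)"
proof -
  obtain X where "min_sep (insert f X)" using not_flexible_obtains[OF f not_flexible] .
  then have "{Z. min_sep Z \<and> f \<in> Z} \<noteq> {}" by blast
  moreover have "finite {Z. min_sep Z \<and> f \<in> Z}"
    by (rule finite_subset[of _ "Pow E"]) (use finite_ground in \<open>auto simp: min_sep_def\<close>)
  ultimately show ?thesis unfolding least_min_sep_def by (intro min_sep_Inter) auto
qed

text \<open>The least member containing \<open>f\<close> lies inside \<open>X + f\<close>, so removing \<open>f\<close> from it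
  amounts to intersecting with \<open>X\<close>.\<close>

lemma min_sep_least_min_sep_remove: "min_sep (least_min_sep f - {f})"
proof -
  obtain X where X: "min_sep X" "f \<notin> X" "min_sep (insert f X)"
    using not_flexible_obtains[OF f not_flexible] .
  then have "least_min_sep f - {f} = least_min_sep f \<inter> X"
    using least_min_sep_subset[OF X(3)] by blast
  then show ?thesis using min_sep_Int[OF min_sep_least_min_sep X(1)] by simp
qed

lemma least_min_sep_psubset:
  assumes "g \<in> least_min_sep f" "g \<noteq> f"
  shows "least_min_sep g \<subset> least_min_sep f"
  using least_min_sep_subset[OF min_sep_least_min_sep_remove] assms mem_least_min_sep[of f] by blast

end

lemma exists_dependency_sorted_listing:
  assumes "F \<subseteq> E - (S \<union> T)" "\<forall>e\<in>F. \<not> flexible E r S T e"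
  obtains fs where "distinct fs" "set fs = F" "dependency_sorted least_min_sep fs"
proof (rule exists_dependency_sorted_list)
  show "finite F" using assms(1) finite_ground finite_subset by blast
  show "finite (least_min_sep f)" if "f \<in> F" for f
    using min_sep_least_min_sep assms that finite_ground finite_subset unfolding min_sep_def by blast
  show "least_min_sep g \<subset> least_min_sep f" if "f \<in> F" "g \<in> least_min_sep f" "g \<noteq> f" for f g
    using least_min_sep_psubset assms that by blast
qed (rule that)

context
  fixes xs assumes xs: "\<forall>x \<in> set xs. x \<in> E - (S \<union> T) \<and> \<not> flexible E r S T x"
begin

lemma min_sep_prefix_union:
  assumes "0 < n" "n \<le> length xs"
  shows "min_sep (prefix_union least_min_sep xs n)"
  unfolding prefix_union_def
proof (rule min_sep_Union)
  show "least_min_sep ` set (take n xs) \<noteq> {}" using assms by (cases xs) auto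
  show "\<forall>Z \<in> least_min_sep ` set (take n xs). min_sep Z"
    using xs in_set_takeD min_sep_least_min_sep by fast
qed simp

lemma min_sep_prefix_union_Suc_remove:
  assumes "distinct xs" "dependency_sorted least_min_sep xs" "i < length xs"
  shows "min_sep (prefix_union least_min_sep xs (Suc i) - {xs ! i})"
proof -
  have "min_sep (least_min_sep (xs ! i) - {xs ! i})"
    using xs nth_mem[OF assms(3)] min_sep_least_min_sep_remove by blast
  moreover have "min_sep (prefix_union least_min_sep xs i)" if "0 < i"
    using that assms(3) by (intro min_sep_prefix_union) auto
  moreover have "prefix_union least_min_sep xs 0 = {}" unfolding prefix_union_def by simp
  ultimately show ?thesis
    unfolding prefix_union_Suc_remove[OF assms] by (cases "i = 0") (auto intro: min_sep_Un)
qed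

lemma prefix_union_mem_cl_or_cl_dual:
  assumes "distinct xs" "dependency_sorted least_min_sep xs" "i < length xs"
  defines "A \<equiv> prefix_union least_min_sep xs (Suc i)"
  shows "xs ! i \<in> cl E r (A - {xs ! i}) \<inter> cl E r (E - A)
       \<or> xs ! i \<in> cl_dual E r (A - {xs ! i}) \<inter> cl_dual E r (E - A)"
proof (rule mem_cl_or_cl_dual_if_conn_remove_eq)
  have "min_sep A" "min_sep (A - {xs ! i})"
    using min_sep_prefix_union[of "Suc i"] min_sep_prefix_union_Suc_remove[OF assms(1-3)] assms(3)
    unfolding A_def by simp_all
  then show "A \<subseteq> E" "conn E r (A - {xs ! i}) = conn E r A" unfolding min_sep_def by auto
  show "xs ! i \<in> A"
    unfolding A_def prefix_union_def using mem_least_min_sep take_Suc_conv_app_nth[OF assms(3)] by auto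
qed

end

end

theorem theorem3p4:
  fixes E :: "'a set" and r :: "'a set \<Rightarrow> nat" and S T F :: "'a set"
  assumes "matroid E r"
    and "S \<subseteq> E" and "T \<subseteq> E" and "S \<inter> T = {}"
    and "F \<subseteq> E - (S \<union> T)"
    and "\<forall>e\<in>F. \<not> flexible E r S T e"
  shows "\<exists>fs As. distinct fs \<and> set fs = F \<and> length As = length fs
    \<and> (\<forall>i < length fs. S \<subseteq> As ! i \<and> As ! i \<subseteq> E - T
                         \<and> conn E r (As ! i) = kappa E r S T)
    \<and> (\<forall>i. i + 1 < length fs \<longrightarrow> As ! i \<subseteq> As ! (i + 1))
    \<and> (\<forall>i < length fs. As ! i \<inter> F = set (take (i + 1) fs))
    \<and> (\<forall>i < length fs.
         fs ! i \<in> cl E r (As ! i - {fs ! i}) \<inter> cl E r (E - As ! i)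
       \<or> fs ! i \<in> cl_dual E r (As ! i - {fs ! i}) \<inter> cl_dual E r (E - As ! i))"
proof -
  interpret matroid_terminals E r S T using assms(1,2,4) by unfold_locales
  obtain fs where fs: "distinct fs" "set fs = F" "dependency_sorted least_min_sep fs"
    using exists_dependency_sorted_listing[OF assms(5,6)] .
  have fs_good: "\<forall>x \<in> set fs. x \<in> E - (S \<union> T) \<and> \<not> flexible E r S T x"
    using assms(5,6) fs(2) by blast
  define As where "As = map (\<lambda>i. prefix_union least_min_sep fs (Suc i)) [0..<length fs]"
  have As: "As ! i = prefix_union least_min_sep fs (Suc i)" if "i < length fs" for i
    using that unfolding As_def by simp
  show ?thesis
  proof (intro exI[of _ fs] exI[of _ As] conjI allI impI)
    fix i assume i: "i < length fs"
    show "S \<subseteq> As ! i" "As ! i \<subseteq> E - T" "conn E r (As ! i) = kappa E r S T"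
      using min_sep_prefix_union[OF fs_good, of "Suc i"] i unfolding As[OF i] min_sep_def by auto
    show "As ! i \<inter> F = set (take (i + 1) fs)"
      using prefix_union_inter_set[OF fs(3) mem_least_min_sep] fs(2) unfolding As[OF i] by simp
    show "fs ! i \<in> cl E r (As ! i - {fs ! i}) \<inter> cl E r (E - As ! i)
       \<or> fs ! i \<in> cl_dual E r (As ! i - {fs ! i}) \<inter> cl_dual E r (E - As ! i)"
      unfolding As[OF i] by (rule prefix_union_mem_cl_or_cl_dual[OF fs_good fs(1,3) i])
  next
    fix i assume "i + 1 < length fs"
    then show "As ! i \<subseteq> As ! (i + 1)"
      using prefix_union_mono[of "Suc i" "Suc (Suc i)"] by (simp add: As)
  qed (use fs in \<open>simp_all add: As_def\<close>)
qed

end
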